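(* Let $\varphi:\mathbb{R}^n\to\mathbb{R}$ be continuously differentiable with $\nabla\varphi$ Lipschitz continuous around $x\in\mathbb{R}^n$. Suppose $\nabla\varphi(x)\neq0$ and that $\partial^2\varphi(x)$ is positive-definite, i.e. $\langle z,u\rangle>0$ for all $u\neq0$ and all $z\in\partial^2\varphi(x)(u)$. Then there exists a nonzero $d\in\mathbb{R}^n$ with $-\nabla\varphi(x)\in\partial^2\varphi(x)(d)$. Moreover, every such $d$ satisfies $\langle\nabla\varphi(x),d\rangle<0$. Consequently, for each $\sigma\in(0,1)$ and each $d$ with $-\nabla\varphi(x)\in\partial^2\varphi(x)(d)$ there is $\delta>0$ such that $\varphi(x+\tau d)\le\varphi(x)+\sigma\tau\langle\nabla\varphi(x),d\rangle$ for all $\tau\in(0,\delta)$.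
   Context: Regular normal cone: $\widehat N_\Omega(\bar z):=\{v\mid \limsup_{z\to\bar z,\,z\in\Omega}\langle v,z-\bar z\rangle/\|z-\bar z\|\le 0\}$; limiting normal cone $N_\Omega(\bar z)$: all $v$ such that there are $z_k\to\bar z$, $z_k\in\Omega$, $v_k\to v$, $v_k\in\widehat N_\Omega(z_k)$. Coderivative of $F:\mathbb{R}^n\rightrightarrows\mathbb{R}^m$: $D^*F(\bar x,\bar y)(v):=\{u\mid (u,-v)\in N_{\operatorname{gph}F}(\bar x,\bar y)\}$. Second-order subdifferential: $\partial^2\varphi(x)(u):=D^*(\nabla\varphi)(x,\nabla\varphi(x))(u)$. *)

theory Defs
  imports "HOL-Analysis.Analysis" "HOL-Library.Liminf_Limsup"
begin

definition regular_normal_cone :: "'a::euclidean_space set \<Rightarrow> 'a \<Rightarrow> 'a set" where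
  "regular_normal_cone \<Omega> zb =
     {v. zb \<in> \<Omega> \<and>
         Limsup (at zb within \<Omega>) (\<lambda>z. ereal (inner v (z - zb) / norm (z - zb))) \<le> 0}"

definition limiting_normal_cone :: "'a::euclidean_space set \<Rightarrow> 'a \<Rightarrow> 'a set" where
  "limiting_normal_cone \<Omega> zb =
     {v. \<exists>z vs. (\<forall>k. z k \<in> \<Omega>) \<and> z \<longlonglongrightarrow> zb \<and> vs \<longlonglongrightarrow> v \<and>
                (\<forall>k. vs k \<in> regular_normal_cone \<Omega> (z k))}"

definition graph_of :: "('a \<Rightarrow> 'b set) \<Rightarrow> ('a \<times> 'b) set" where
  "graph_of F = {(x, y). y \<in> F x}"

definition coderivative ::
  "('a::euclidean_space \<Rightarrow> 'b::euclidean_space set) \<Rightarrow> 'a \<Rightarrow> 'b \<Rightarrow> 'b \<Rightarrow> 'a set" where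
  "coderivative F xb yb v = {u. (u, - v) \<in> limiting_normal_cone (graph_of F) (xb, yb)}"

text \<open>Second-order subdifferential of a C^1 function, given through its gradient map g.\<close>
definition second_order_subdiff :: "('a::euclidean_space \<Rightarrow> 'a) \<Rightarrow> 'a \<Rightarrow> 'a \<Rightarrow> 'a set" where
  "second_order_subdiff g x u = coderivative (\<lambda>y. {g y}) x (g x) u"

end

(*
  Positive-definiteness of the second-order subdifferential forces the gradient map g to be
  strongly subregular at x, i.e. c |y - x| <= |g y - g x| near x.  Otherwise there are unit
  directions e along which g barely moves; minimising <e, g y> plus a quadratic penalty tilted
  along e over a small half-ball gives an interior minimiser, hence a regular normal (z, -e) to
  the graph with <z, e> small, and a limit of these contradicts positive-definiteness.

  Under subregularity, minimisers of -<w, y - x> + k/2 |g y - g x|^2 over a small ball tend to x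
  as k grows, and their regular normals (w, -k (g y - g x)) stay bounded by the Lipschitz
  constant; a limit point shows that every w lies in the range of the coderivative.  For
  w = -g x this is the Newton direction d, which is nonzero because the coderivative of a
  Lipschitz map vanishes at 0, is a descent direction by positive-definiteness, and therefore
  satisfies the Armijo condition.
*)
theory Submission
  imports Defs
begin

lemma mem_graph_of_singleton_iff: "(y, v) \<in> graph_of (\<lambda>y. {g y}) \<longleftrightarrow> v = g y"
  by (simp add: graph_of_def)

lemma mem_second_order_subdiff_iff:
  "z \<in> second_order_subdiff g x u \<longleftrightarrow>
     (z, - u) \<in> limiting_normal_cone (graph_of (\<lambda>y. {g y})) (x, g x)"
  by (simp add: second_order_subdiff_def coderivative_def)

lemma regular_normal_coneD:
  assumes "v \<in> regular_normal_cone \<Omega> zb" "\<epsilon> > 0"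
  obtains \<delta> where "\<delta> > 0"
    "\<And>z. z \<in> \<Omega> \<Longrightarrow> z \<noteq> zb \<Longrightarrow> dist z zb < \<delta> \<Longrightarrow> inner v (z - zb) \<le> \<epsilon> * norm (z - zb)"
proof -
  have "Limsup (at zb within \<Omega>) (\<lambda>z. ereal (inner v (z - zb) / norm (z - zb))) < ereal \<epsilon>"
    using assms unfolding regular_normal_cone_def by (auto intro: le_less_trans)
  then have "\<forall>\<^sub>F z in at zb within \<Omega>. inner v (z - zb) / norm (z - zb) < \<epsilon>"
    by (rule eventually_mono[OF Limsup_lessD]) simp
  then obtain \<delta> where "\<delta> > 0"
    and \<delta>: "\<And>z. z \<in> \<Omega> \<Longrightarrow> z \<noteq> zb \<Longrightarrow> dist z zb < \<delta> \<Longrightarrow> inner v (z - zb) / norm (z - zb) < \<epsilon>"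
    unfolding eventually_at by blast
  show thesis
    by (rule that[OF \<open>\<delta> > 0\<close>]) (use \<delta> in \<open>fastforce simp: divide_less_eq mult.commute\<close>)
qed

lemma regular_normal_coneI_proximal:
  assumes "zb \<in> \<Omega>" "\<delta> > 0"
    and proximal: "\<And>z. z \<in> \<Omega> \<Longrightarrow> dist z zb < \<delta> \<Longrightarrow> inner v (z - zb) \<le> C * (norm (z - zb))\<^sup>2"
  shows "v \<in> regular_normal_cone \<Omega> zb"
proof -
  have bound: "\<forall>\<^sub>F z in at zb within \<Omega>. inner v (z - zb) / norm (z - zb) \<le> \<bar>C\<bar> * norm (z - zb)"
    unfolding eventually_at
  proof (intro exI conjI ballI impI)
    fix z assume "z \<in> \<Omega>" "z \<noteq> zb \<and> dist z zb < \<delta>"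
    then have "inner v (z - zb) \<le> \<bar>C\<bar> * (norm (z - zb))\<^sup>2" "norm (z - zb) > 0"
      using proximal[of z] abs_ge_self[of C] by (auto intro: order_trans mult_right_mono)
    then show "inner v (z - zb) / norm (z - zb) \<le> \<bar>C\<bar> * norm (z - zb)"
      by (simp add: divide_le_eq power2_eq_square mult.assoc)
  qed (fact \<open>\<delta> > 0\<close>)
  have lim: "((\<lambda>z. \<bar>C\<bar> * norm (z - zb)) \<longlongrightarrow> 0) (at zb within \<Omega>)"
    by (auto intro!: tendsto_eq_intros)
  have small: "\<forall>\<^sub>F z in at zb within \<Omega>. inner v (z - zb) / norm (z - zb) < r" if "r > 0" for r
    using order_tendstoD(2)[OF lim that] bound by eventually_elim auto
  then have "Limsup (at zb within \<Omega>) (\<lambda>z. ereal (inner v (z - zb) / norm (z - zb))) \<le> 0"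
    unfolding Limsup_le_iff
  proof (intro allI impI)
    fix y :: ereal assume "y > 0"
    then obtain r where "0 < ereal r" "ereal r < y" using ereal_dense2 by blast
    then show "\<forall>\<^sub>F z in at zb within \<Omega>. y > ereal (inner v (z - zb) / norm (z - zb))"
      using small[of r] by (auto elim!: eventually_mono intro: less_trans[of _ "ereal r"])
  qed
  then show ?thesis using \<open>zb \<in> \<Omega>\<close> unfolding regular_normal_cone_def by auto
qed

lemma regular_normal_cone_graph_at_local_min:
  fixes g :: "'a::euclidean_space \<Rightarrow> 'b::euclidean_space" and h :: "'a \<times> 'b \<Rightarrow> real"
  assumes "\<delta> > 0"
    and local_min: "\<And>y'. dist y' y < \<delta> \<Longrightarrow> h (y, g y) \<le> h (y', g y')"
    and upper: "\<And>y'. h (y', g y') - h (y, g y)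
                  \<le> inner \<xi> ((y', g y') - (y, g y)) + C * (norm ((y', g y') - (y, g y)))\<^sup>2"
  shows "- \<xi> \<in> regular_normal_cone (graph_of (\<lambda>y. {g y})) (y, g y)"
proof (rule regular_normal_coneI_proximal[OF _ \<open>\<delta> > 0\<close>])
  fix z assume "z \<in> graph_of (\<lambda>y. {g y})" "dist z (y, g y) < \<delta>"
  moreover obtain y' where "z = (y', g y')"
    using \<open>z \<in> graph_of _\<close> by (cases z) (simp add: mem_graph_of_singleton_iff)
  ultimately have "h (y, g y) \<le> h z"
    using local_min dist_fst_le[of z "(y, g y)"] by simp
  then show "inner (- \<xi>) (z - (y, g y)) \<le> C * (norm (z - (y, g y)))\<^sup>2"
    using upper[of y'] \<open>z = (y', g y')\<close> by simp
qed (simp add: mem_graph_of_singleton_iff)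

lemma regular_normal_cone_graph_lipschitz_bound:
  fixes g :: "'a::euclidean_space \<Rightarrow> 'b::euclidean_space"
  assumes lip: "L-lipschitz_on U g" and "open U" "y \<in> U"
    and normal: "(a, b) \<in> regular_normal_cone (graph_of (\<lambda>y. {g y})) (y, g y)"
  shows "norm a \<le> L * norm b"
proof (rule field_le_epsilon)
  fix \<epsilon> :: real assume "\<epsilon> > 0"
  have "L \<ge> 0" using lip by (rule lipschitz_on_nonneg)
  show "norm a \<le> L * norm b + \<epsilon>"
  proof (cases "a = 0")
    case True then show ?thesis using \<open>L \<ge> 0\<close> \<open>\<epsilon> > 0\<close> by simp
  next
    case False
    obtain \<delta> where "\<delta> > 0" and \<delta>: "\<And>z. z \<in> graph_of (\<lambda>y. {g y}) \<Longrightarrow> z \<noteq> (y, g y) \<Longrightarrow>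
        dist z (y, g y) < \<delta> \<Longrightarrow> inner (a, b) (z - (y, g y)) \<le> \<epsilon> / (1 + L) * norm (z - (y, g y))"
      using regular_normal_coneD[OF normal, of "\<epsilon> / (1 + L)"] \<open>\<epsilon> > 0\<close> \<open>L \<ge> 0\<close> by auto
    obtain \<rho> where "\<rho> > 0" "ball y \<rho> \<subseteq> U" using \<open>open U\<close> \<open>y \<in> U\<close> open_contains_ball by blast
    define t where "t = min (\<rho> / 2) (\<delta> / (2 * (1 + L)))"
    define h where "h = (t / norm a) *\<^sub>R a"
    have "t > 0" using \<open>\<rho> > 0\<close> \<open>\<delta> > 0\<close> \<open>L \<ge> 0\<close> by (simp add: t_def)
    have "norm h = t" "inner a h = t * norm a"
      using \<open>t > 0\<close> \<open>a \<noteq> 0\<close> by (simp_all add: h_def dot_square_norm power2_eq_square)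
    have "y + h \<in> U" using \<open>ball y \<rho> \<subseteq> U\<close> \<open>norm h = t\<close> \<open>t > 0\<close> by (auto simp: dist_norm t_def)
    then have gh: "norm (g (y + h) - g y) \<le> L * t"
      using lipschitz_on_normD[OF lip _ \<open>y \<in> U\<close>] \<open>norm h = t\<close> by fastforce
    have "norm (h, g (y + h) - g y) \<le> (1 + L) * t"
      using norm_Pair_le[of h "g (y + h) - g y"] \<open>norm h = t\<close> gh by (simp add: algebra_simps)
    also have "\<dots> \<le> (1 + L) * (\<delta> / (2 * (1 + L)))"
      using \<open>L \<ge> 0\<close> by (intro mult_left_mono) (auto simp: t_def)
    also have "\<dots> < \<delta>" using \<open>\<delta> > 0\<close> \<open>L \<ge> 0\<close> by (simp add: field_simps add_pos_nonneg)
    finally have "dist (y + h, g (y + h)) (y, g y) < \<delta>" by (simp add: dist_norm)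
    moreover have "(y + h, g (y + h)) \<noteq> (y, g y)" using \<open>norm h = t\<close> \<open>t > 0\<close> by auto
    ultimately have "inner (a, b) (h, g (y + h) - g y) \<le> \<epsilon> / (1 + L) * norm (h, g (y + h) - g y)"
      using \<delta>[of "(y + h, g (y + h))"] by (simp add: mem_graph_of_singleton_iff)
    also have "\<dots> \<le> \<epsilon> / (1 + L) * ((1 + L) * t)"
      using \<open>norm (h, _) \<le> (1 + L) * t\<close> \<open>\<epsilon> > 0\<close> \<open>L \<ge> 0\<close> by (intro mult_left_mono) auto
    also have "\<dots> = \<epsilon> * t" using \<open>L \<ge> 0\<close> by simp
    finally have upper: "inner a h + inner b (g (y + h) - g y) \<le> \<epsilon> * t" by simp
    have "- inner b (g (y + h) - g y) \<le> norm b * norm (g (y + h) - g y)"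
      using Cauchy_Schwarz_ineq2[of b "g (y + h) - g y"] by linarith
    also have "\<dots> \<le> norm b * (L * t)" using gh by (rule mult_left_mono) simp
    finally have "t * norm a \<le> t * (L * norm b) + t * \<epsilon>"
      using upper \<open>inner a h = t * norm a\<close> by (simp add: algebra_simps)
    then show ?thesis using \<open>t > 0\<close> by (simp add: distrib_left[symmetric])
  qed
qed

lemma limiting_normal_cone_graph_lipschitz_bound:
  fixes g :: "'a::euclidean_space \<Rightarrow> 'b::euclidean_space"
  assumes lip: "L-lipschitz_on U g" and "open U" "x \<in> U"
    and normal: "(a, b) \<in> limiting_normal_cone (graph_of (\<lambda>y. {g y})) (x, g x)"
  shows "norm a \<le> L * norm b"
proof -
  obtain zs vs where zs: "\<And>k. zs k \<in> graph_of (\<lambda>y. {g y})" "zs \<longlonglongrightarrow> (x, g x)"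
    and vs: "vs \<longlonglongrightarrow> (a, b)" "\<And>k. vs k \<in> regular_normal_cone (graph_of (\<lambda>y. {g y})) (zs k)"
    using normal unfolding limiting_normal_cone_def by blast
  have zs_eq: "zs k = (fst (zs k), g (fst (zs k)))" for k
    using zs(1)[of k] by (cases "zs k") (simp add: mem_graph_of_singleton_iff)
  have "\<forall>\<^sub>F k in sequentially. fst (zs k) \<in> U"
    using topological_tendstoD[OF tendsto_fst[OF zs(2)]] \<open>open U\<close> \<open>x \<in> U\<close> by simp
  then have "\<forall>\<^sub>F k in sequentially. norm (fst (vs k)) \<le> L * norm (snd (vs k))"
  proof eventually_elim
    case (elim k)
    show ?case
      using regular_normal_cone_graph_lipschitz_bound[OF lip \<open>open U\<close> elim] vs(2)[of k] zs_eq[of k]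
      by simp
  qed
  moreover have "(\<lambda>k. norm (fst (vs k))) \<longlonglongrightarrow> norm a" "(\<lambda>k. L * norm (snd (vs k))) \<longlonglongrightarrow> L * norm b"
    using tendsto_fst[OF vs(1)] tendsto_snd[OF vs(1)] by (auto intro!: tendsto_intros)
  ultimately show ?thesis by (auto intro: tendsto_le[OF trivial_limit_sequentially])
qed

lemma second_order_subdiff_zero_lipschitz:
  assumes "L-lipschitz_on U g" "open U" "x \<in> U" "z \<in> second_order_subdiff g x 0"
  shows "z = 0"
  using limiting_normal_cone_graph_lipschitz_bound[OF assms(1-3), of z 0] assms(4)
  by (simp add: mem_second_order_subdiff_iff)

lemma limiting_normal_cone_graph_of_bounded_seq:
  fixes g :: "'a::euclidean_space \<Rightarrow> 'b::euclidean_space"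
  assumes "isCont g x" "Y \<longlonglongrightarrow> x" "compact K"
    and normals: "\<And>k. V k \<in> regular_normal_cone (graph_of (\<lambda>y. {g y})) (Y k, g (Y k))"
    and bounded: "\<And>k. V k \<in> K"
  obtains v r where "v \<in> K" "strict_mono r" "(V \<circ> r) \<longlonglongrightarrow> v"
    "v \<in> limiting_normal_cone (graph_of (\<lambda>y. {g y})) (x, g x)"
proof -
  obtain v r where "v \<in> K" "strict_mono r" and lim: "(V \<circ> r) \<longlonglongrightarrow> v"
    using seq_compactE[OF compact_imp_seq_compact[OF \<open>compact K\<close>]] bounded by metis
  have "(\<lambda>k. Y (r k)) \<longlonglongrightarrow> x"
    using LIMSEQ_subseq_LIMSEQ[OF \<open>Y \<longlonglongrightarrow> x\<close> \<open>strict_mono r\<close>] by (simp add: o_def)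
  then have "(\<lambda>k. (Y (r k), g (Y (r k)))) \<longlonglongrightarrow> (x, g x)"
    using isCont_tendsto_compose[OF \<open>isCont g x\<close>] by (intro tendsto_Pair)
  then have "v \<in> limiting_normal_cone (graph_of (\<lambda>y. {g y})) (x, g x)"
    unfolding limiting_normal_cone_def
    using lim normals
    by (intro CollectI exI[of _ "\<lambda>k. (Y (r k), g (Y (r k)))"] exI[of _ "V \<circ> r"])
      (simp add: mem_graph_of_singleton_iff)
  with that \<open>v \<in> K\<close> \<open>strict_mono r\<close> lim show thesis by blast
qed

text \<open>For a unit vector e, the last term is K/2 times the squared distance of u from the
  line spanned by e, so the penalty is stiffer across the slow direction e than along it.\<close>
definition tilted_quadratic :: "real \<Rightarrow> real \<Rightarrow> real \<Rightarrow> 'a::real_inner \<Rightarrow> 'a \<Rightarrow> real" where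
  "tilted_quadratic a b K e u = - a * inner e u + b / 2 * inner u u + K / 2 * (inner u u - (inner e u)\<^sup>2)"

lemma tilted_quadratic_increment:
  "tilted_quadratic a b K e (u + D) - tilted_quadratic a b K e u =
     inner (- a *\<^sub>R e + b *\<^sub>R u + K *\<^sub>R (u - inner e u *\<^sub>R e)) D + tilted_quadratic 0 b K e D"
  by (simp add: tilted_quadratic_def inner_add_left inner_add_right inner_diff_left inner_commute
      power2_eq_square algebra_simps)

lemma tilted_penalty_lower_bound:
  fixes L a t n s :: real
  defines "K \<equiv> 2 * L\<^sup>2 / (a * t) + 1" and "S \<equiv> 3 * (L + a) * t / a"
  assumes "0 \<le> L" "0 < a" "0 < t" "0 \<le> s" "s \<le> n" and "s = 0 \<or> n = S"
  shows "- a * t / 4 < - L * n - a * s + a / t / 2 * n\<^sup>2 + K / 2 * (n\<^sup>2 - s\<^sup>2)"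
  using \<open>s = 0 \<or> n = S\<close>
proof
  assume "s = 0"
  define M where "M = a / t + K"
  have "M > 0" "a * t * M = a\<^sup>2 + 2 * L\<^sup>2 + a * t"
    using assms(3-5) by (simp_all add: M_def K_def field_simps power2_eq_square add_pos_nonneg)
  then have "L\<^sup>2 / (2 * M) < a * t / 4"
    using assms(4,5) by (simp add: field_simps power2_eq_square add_pos_pos)
  moreover have "0 \<le> (M * n - L)\<^sup>2 / (2 * M)" using \<open>M > 0\<close> by simp
  moreover have "(M * n - L)\<^sup>2 / (2 * M) = - L * n + M / 2 * n\<^sup>2 + L\<^sup>2 / (2 * M)"
    using \<open>M > 0\<close> by (simp add: field_simps power2_eq_square)
  ultimately have "- a * t / 4 < - L * n + M / 2 * n\<^sup>2" by linarith
  then show ?thesis using \<open>s = 0\<close> by (simp add: M_def add_divide_distrib distrib_right)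
next
  assume "n = S"
  have "K \<ge> 0" using assms(3-5) by (simp add: K_def)
  then have "0 \<le> K / 2 * (n\<^sup>2 - s\<^sup>2)" using assms(6,7) by (simp add: power_mono)
  moreover have "a * s \<le> a * S" using assms(4,7) \<open>n = S\<close> by simp
  moreover have "- L * S - a * S + a / t / 2 * S\<^sup>2 = (L + a) * S / 2"
    using assms(4,5) by (simp add: S_def field_simps power2_eq_square)
  moreover have "(L + a) * S / 2 \<ge> 0" using assms(3-5) by (simp add: S_def)
  moreover have "0 < a * t" using assms(4,5) by simp
  ultimately show ?thesis unfolding \<open>n = S\<close> by linarith
qed

lemma slow_direction_sublevel_interior:
  fixes g :: "'a::euclidean_space \<Rightarrow> 'a" and L a t :: real
  defines "K \<equiv> 2 * L\<^sup>2 / (a * t) + 1" and "S \<equiv> 3 * (L + a) * t / a"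
  assumes lip: "L-lipschitz_on (ball x \<epsilon>) g" and "0 < a" "0 < t" "S < \<epsilon>" "norm e = 1"
    and "dist y x \<le> S" "inner e (y - x) \<ge> 0"
    and below: "inner e (g y) + tilted_quadratic a (a / t) K e (y - x) < inner e (g x) - a * t / 4"
  shows "dist y x < S" "inner e (y - x) > 0"
proof -
  have "L \<ge> 0" using lip by (rule lipschitz_on_nonneg)
  define n s where "n = norm (y - x)" and "s = inner e (y - x)"
  have "0 \<le> s" "s \<le> n" "n \<le> S"
    using assms(8,9) Cauchy_Schwarz_ineq2[of e "y - x"] \<open>norm e = 1\<close>
    by (auto simp: s_def n_def dist_norm)
  have "0 < S" using \<open>L \<ge> 0\<close> \<open>0 < a\<close> \<open>0 < t\<close> by (simp add: S_def add_nonneg_pos)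
  then have "x \<in> ball x \<epsilon>" "y \<in> ball x \<epsilon>" using \<open>S < \<epsilon>\<close> \<open>dist y x \<le> S\<close> by (auto simp: dist_commute)
  then have "norm (g y - g x) \<le> L * n" using lipschitz_on_normD[OF lip] by (simp add: n_def)
  moreover have "- inner e (g y - g x) \<le> norm (g y - g x)"
    using Cauchy_Schwarz_ineq2[of e "g y - g x"] \<open>norm e = 1\<close> by simp
  ultimately have low: "- L * n - a * s + a / t / 2 * n\<^sup>2 + K / 2 * (n\<^sup>2 - s\<^sup>2) < - a * t / 4"
    using below by (simp add: tilted_quadratic_def dot_square_norm n_def s_def inner_diff_right)
  have "\<not> (s = 0 \<or> n = S)"
  proof
    assume "s = 0 \<or> n = S"
    from tilted_penalty_lower_bound[OF \<open>L \<ge> 0\<close> \<open>0 < a\<close> \<open>0 < t\<close> \<open>0 \<le> s\<close> \<open>s \<le> n\<close> this[unfolded S_def]]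
    show False using low by (simp add: K_def)
  qed
  then show "dist y x < S" "inner e (y - x) > 0"
    using \<open>0 \<le> s\<close> \<open>n \<le> S\<close> by (auto simp: n_def s_def dist_norm)
qed

lemma slow_direction_local_minimiser:
  fixes g :: "'a::euclidean_space \<Rightarrow> 'a" and L a t :: real
  defines "K \<equiv> 2 * L\<^sup>2 / (a * t) + 1" and "S \<equiv> 3 * (L + a) * t / a"
  assumes lip: "L-lipschitz_on (ball x \<epsilon>) g" and "0 < a" "0 < t" "S < \<epsilon>" "norm e = 1"
    and slow: "norm (g (x + t *\<^sub>R e) - g x) < a / 4 * t"
  obtains y \<delta> where "\<delta> > 0" "dist y x < S" "inner e (y - x) > 0"
    "\<And>y'. dist y' y < \<delta> \<Longrightarrow> inner e (g y) + tilted_quadratic a (a / t) K e (y - x)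
                             \<le> inner e (g y') + tilted_quadratic a (a / t) K e (y' - x)"
proof -
  define \<Phi> where "\<Phi> y = inner e (g y) + tilted_quadratic a (a / t) K e (y - x)" for y
  define R where "R = cball x S \<inter> {y. inner e (y - x) \<ge> 0}"
  have "R \<subseteq> ball x \<epsilon>" using \<open>S < \<epsilon>\<close> by (auto simp: R_def)
  have "compact R"
    unfolding R_def by (intro compact_Int_closed compact_cball closed_Collect_le continuous_intros)
  moreover have "continuous_on R \<Phi>"
    using continuous_on_subset[OF lipschitz_on_continuous_on[OF lip] \<open>R \<subseteq> ball x \<epsilon>\<close>]
    unfolding \<Phi>_def tilted_quadratic_def by (intro continuous_intros) auto
  moreover have "x + t *\<^sub>R e \<in> R"
  proof -
    have "t \<le> S"
      using lipschitz_on_nonneg[OF lip] \<open>0 < a\<close> \<open>0 < t\<close> by (simp add: S_def field_simps)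
    then show ?thesis using \<open>0 < t\<close> \<open>norm e = 1\<close> by (simp add: R_def dist_norm dot_square_norm)
  qed
  ultimately obtain y where "y \<in> R" and min: "\<And>y'. y' \<in> R \<Longrightarrow> \<Phi> y \<le> \<Phi> y'"
    using continuous_attains_inf[of R \<Phi>] by blast
  have "\<Phi> (x + t *\<^sub>R e) < inner e (g x) - a * t / 4"
  proof -
    have "inner e (g (x + t *\<^sub>R e) - g x) \<le> norm (g (x + t *\<^sub>R e) - g x)"
      using norm_cauchy_schwarz[of e] \<open>norm e = 1\<close> by simp
    moreover have "tilted_quadratic a (a / t) K e (t *\<^sub>R e) = - a * t / 2"
      using \<open>norm e = 1\<close> \<open>0 < t\<close> by (simp add: tilted_quadratic_def dot_square_norm power2_eq_square)
    ultimately show ?thesis using slow by (simp add: \<Phi>_def inner_diff_right)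
  qed
  then have "\<Phi> y < inner e (g x) - a * t / 4" using min[OF \<open>x + t *\<^sub>R e \<in> R\<close>] by simp
  then have "dist y x < S" "inner e (y - x) > 0"
    using slow_direction_sublevel_interior[OF lip \<open>0 < a\<close> \<open>0 < t\<close> \<open>S < \<epsilon>\<close>[unfolded S_def]
        \<open>norm e = 1\<close>, of y] \<open>y \<in> R\<close>
    unfolding \<Phi>_def K_def S_def by (auto simp: R_def S_def dist_commute)
  then have "y \<in> ball x S \<inter> {y. inner e (y - x) > 0}" by (simp add: dist_commute)
  moreover have "open (ball x S \<inter> {y. inner e (y - x) > 0})"
    by (intro open_Int open_ball open_Collect_less continuous_intros)
  ultimately obtain \<delta> where "\<delta> > 0" "ball y \<delta> \<subseteq> ball x S \<inter> {y. inner e (y - x) > 0}"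
    using open_contains_ball by blast
  have "\<Phi> y \<le> \<Phi> y'" if "dist y' y < \<delta>" for y'
  proof (rule min)
    have "y' \<in> ball y \<delta>" using that by (simp add: dist_commute)
    then show "y' \<in> R" using \<open>ball y \<delta> \<subseteq> _\<close> by (auto simp: R_def)
  qed
  then show thesis
    using that[OF \<open>\<delta> > 0\<close> \<open>dist y x < S\<close> \<open>inner e (y - x) > 0\<close>] by (simp add: \<Phi>_def)
qed

lemma slow_direction_regular_normal:
  fixes g :: "'a::euclidean_space \<Rightarrow> 'a" and L a t :: real
  assumes lip: "L-lipschitz_on (ball x \<epsilon>) g" and "0 < a" "0 < t" "3 * (L + a) * t / a < \<epsilon>"
    and "norm e = 1" and slow: "norm (g (x + t *\<^sub>R e) - g x) < a / 4 * t"
  obtains y z where "dist y x < 3 * (L + a) * t / a"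
    "(z, - e) \<in> regular_normal_cone (graph_of (\<lambda>y. {g y})) (y, g y)" "inner z e \<le> a"
proof -
  define b K where "b = a / t" and "K = 2 * L\<^sup>2 / (a * t) + 1"
  obtain y \<delta> where "\<delta> > 0" "dist y x < 3 * (L + a) * t / a" "inner e (y - x) > 0"
    and min: "\<And>y'. dist y' y < \<delta> \<Longrightarrow> inner e (g y) + tilted_quadratic a b K e (y - x)
                                 \<le> inner e (g y') + tilted_quadratic a b K e (y' - x)"
    using slow_direction_local_minimiser[OF lip assms(2-6)] unfolding b_def K_def by blast
  define u where "u = y - x"
  define G where "G = - a *\<^sub>R e + b *\<^sub>R u + K *\<^sub>R (u - inner e u *\<^sub>R e)"
  define h where "h = (\<lambda>(y', v). inner e v + tilted_quadratic a b K e (y' - x))"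
  have "b > 0" "K > 0" using \<open>0 < a\<close> \<open>0 < t\<close> by (simp_all add: b_def K_def add_nonneg_pos)
  have "- (G, e) \<in> regular_normal_cone (graph_of (\<lambda>y. {g y})) (y, g y)"
  proof (rule regular_normal_cone_graph_at_local_min[OF \<open>\<delta> > 0\<close>, where h = h and C = "(b + K) / 2"])
    show "h (y, g y) \<le> h (y', g y')" if "dist y' y < \<delta>" for y'
      using min[OF that] by (simp add: h_def)
  next
    fix y'
    have "tilted_quadratic 0 b K e (y' - y) \<le> (b + K) / 2 * (norm (y' - y))\<^sup>2"
      using \<open>K > 0\<close> by (simp add: tilted_quadratic_def dot_square_norm algebra_simps)
    also have "\<dots> \<le> (b + K) / 2 * (norm (y' - y, g y' - g y))\<^sup>2"
      using \<open>b > 0\<close> \<open>K > 0\<close> norm_fst_le by (intro mult_left_mono power_mono) auto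
    finally show "h (y', g y') - h (y, g y)
        \<le> inner (G, e) ((y', g y') - (y, g y)) + (b + K) / 2 * (norm ((y', g y') - (y, g y)))\<^sup>2"
      using tilted_quadratic_increment[of a b K e u "y' - y"]
      by (simp add: h_def G_def u_def inner_diff_right)
  qed
  moreover have "inner (- G) e = a - b * inner e u"
    using \<open>norm e = 1\<close> by (simp add: G_def inner_commute dot_square_norm algebra_simps)
  then have "inner (- G) e \<le> a"
    using \<open>b > 0\<close> \<open>inner e (y - x) > 0\<close> by (simp add: u_def)
  ultimately show thesis using that \<open>dist y x < _\<close> by simp
qed

definition strongly_subregular_at :: "('a::real_normed_vector \<Rightarrow> 'b::real_normed_vector) \<Rightarrow> 'a \<Rightarrow> bool" where
  "strongly_subregular_at g x \<longleftrightarrow>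
     (\<exists>c>0. \<exists>r>0. \<forall>y. dist y x < r \<longrightarrow> c * norm (y - x) \<le> norm (g y - g x))"

lemma not_strongly_subregular_regular_normal:
  fixes g :: "'a::euclidean_space \<Rightarrow> 'a"
  assumes lip: "L-lipschitz_on (ball x \<epsilon>) g" and "\<not> strongly_subregular_at g x" "0 < \<eta>" "\<eta> \<le> \<epsilon>"
  obtains y e z where "dist y x < \<eta>" "norm e = 1"
    "(z, - e) \<in> regular_normal_cone (graph_of (\<lambda>y. {g y})) (y, g y)" "inner z e \<le> \<eta>"
proof -
  have "L \<ge> 0" using lip by (rule lipschitz_on_nonneg)
  define r where "r = \<eta> * \<eta> / (3 * (L + \<eta>))"
  have "r > 0" using \<open>L \<ge> 0\<close> \<open>0 < \<eta>\<close> by (simp add: r_def)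
  moreover have "\<eta> / 4 > 0" using \<open>0 < \<eta>\<close> by simp
  ultimately have "\<not> (\<forall>y. dist y x < r \<longrightarrow> \<eta> / 4 * norm (y - x) \<le> norm (g y - g x))"
    using \<open>\<not> strongly_subregular_at g x\<close> unfolding strongly_subregular_at_def by blast
  then obtain y0 where "dist y0 x < r" and slow: "norm (g y0 - g x) < \<eta> / 4 * norm (y0 - x)"
    by (auto simp: not_le)
  define t e where "t = norm (y0 - x)" and "e = (1 / t) *\<^sub>R (y0 - x)"
  have "t > 0" using slow by (auto simp: t_def)
  then have "norm e = 1" "y0 = x + t *\<^sub>R e" by (simp_all add: e_def t_def)
  have "3 * (L + \<eta>) * t / \<eta> < 3 * (L + \<eta>) * r / \<eta>"
    using \<open>dist y0 x < r\<close> \<open>L \<ge> 0\<close> \<open>0 < \<eta>\<close> by (simp add: t_def dist_norm divide_strict_right_mono)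
  also have "\<dots> = \<eta>" using \<open>L \<ge> 0\<close> \<open>0 < \<eta>\<close> by (simp add: r_def)
  finally have S: "3 * (L + \<eta>) * t / \<eta> < \<eta>" .
  obtain y z where "dist y x < 3 * (L + \<eta>) * t / \<eta>"
    "(z, - e) \<in> regular_normal_cone (graph_of (\<lambda>y. {g y})) (y, g y)" "inner z e \<le> \<eta>"
  proof (rule slow_direction_regular_normal[OF lip \<open>0 < \<eta>\<close> \<open>t > 0\<close> _ \<open>norm e = 1\<close>])
    show "3 * (L + \<eta>) * t / \<eta> < \<epsilon>" using S \<open>\<eta> \<le> \<epsilon>\<close> by simp
    have "norm (g y0 - g x) < \<eta> / 4 * t" using slow by (simp only: t_def)
    then show "norm (g (x + t *\<^sub>R e) - g x) < \<eta> / 4 * t" by (simp only: \<open>y0 = x + t *\<^sub>R e\<close>)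
  qed
  with S that \<open>norm e = 1\<close> show thesis by (meson order.strict_trans)
qed

lemma limiting_normal_of_vanishing_slopes:
  fixes g :: "'a::euclidean_space \<Rightarrow> 'a"
  assumes lip: "L-lipschitz_on (ball x \<epsilon>) g" and "0 < \<epsilon>"
    and "\<And>k. Y k \<in> ball x \<epsilon>" "Y \<longlonglongrightarrow> x" and E: "\<And>k. norm (E k) = 1"
    and normal: "\<And>k. (Z k, - E k) \<in> regular_normal_cone (graph_of (\<lambda>y. {g y})) (Y k, g (Y k))"
    and slope: "\<And>k. inner (Z k) (E k) \<le> s k" "s \<longlonglongrightarrow> 0"
  obtains z e where "norm e = 1" "(z, - e) \<in> limiting_normal_cone (graph_of (\<lambda>y. {g y})) (x, g x)"
    "inner z e \<le> 0"
proof -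
  have "norm (Z k) \<le> L" for k
    using regular_normal_cone_graph_lipschitz_bound[OF lip open_ball \<open>Y k \<in> ball x \<epsilon>\<close> normal] E by simp
  then have bounded: "(Z k, - E k) \<in> cball 0 L \<times> sphere 0 1" for k using E by simp
  have "isCont g x"
    using continuous_on_interior[OF lipschitz_on_continuous_on[OF lip]] \<open>0 < \<epsilon>\<close> by simp
  moreover have "compact (cball (0::'a) L \<times> sphere (0::'a) 1)"
    by (intro compact_Times compact_cball compact_sphere)
  ultimately obtain v r where v: "v \<in> cball 0 L \<times> sphere 0 1" and "strict_mono r"
    and lim: "((\<lambda>k. (Z k, - E k)) \<circ> r) \<longlonglongrightarrow> v"
    and "v \<in> limiting_normal_cone (graph_of (\<lambda>y. {g y})) (x, g x)"
    using limiting_normal_cone_graph_of_bounded_seq[where Y = Y and V = "\<lambda>k. (Z k, - E k)",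
        OF _ \<open>Y \<longlonglongrightarrow> x\<close> _ normal bounded] by blast
  moreover have "inner (fst v) (- snd v) \<le> 0"
  proof (rule tendsto_le[OF trivial_limit_sequentially])
    show "(\<lambda>k. inner (Z (r k)) (E (r k))) \<longlonglongrightarrow> inner (fst v) (- snd v)"
      using tendsto_inner[OF tendsto_fst[OF lim] tendsto_minus[OF tendsto_snd[OF lim]]]
      by (simp add: o_def)
    show "(\<lambda>k. s (r k)) \<longlonglongrightarrow> 0"
      using LIMSEQ_subseq_LIMSEQ[OF \<open>s \<longlonglongrightarrow> 0\<close> \<open>strict_mono r\<close>] by (simp add: o_def)
  qed (simp add: slope always_eventually)
  ultimately show thesis using that[of "- snd v" "fst v"] by (cases v) auto
qed

lemma positive_definite_imp_strongly_subregular: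
  fixes g :: "'a::euclidean_space \<Rightarrow> 'a"
  assumes lip: "L-lipschitz_on (ball x \<epsilon>) g" and "0 < \<epsilon>"
    and pd: "\<And>u z. u \<noteq> 0 \<Longrightarrow> z \<in> second_order_subdiff g x u \<Longrightarrow> inner z u > 0"
  shows "strongly_subregular_at g x"
proof (rule ccontr)
  assume "\<not> strongly_subregular_at g x"
  define \<eta> where "\<eta> k = min \<epsilon> (inverse (real (Suc k)))" for k
  have "0 < \<eta> k" "\<eta> k \<le> \<epsilon>" for k using \<open>0 < \<epsilon>\<close> by (simp_all add: \<eta>_def)
  have "\<exists>y e z. dist y x < \<eta> k \<and> norm e = 1 \<and>
      (z, - e) \<in> regular_normal_cone (graph_of (\<lambda>y. {g y})) (y, g y) \<and> inner z e \<le> \<eta> k" for k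
    using not_strongly_subregular_regular_normal[OF lip \<open>\<not> strongly_subregular_at g x\<close>
        \<open>0 < \<eta> k\<close> \<open>\<eta> k \<le> \<epsilon>\<close>] by blast
  then obtain Y E Z where Y: "\<And>k. dist (Y k) x < \<eta> k" and E: "\<And>k. norm (E k) = 1"
    and normal: "\<And>k. (Z k, - E k) \<in> regular_normal_cone (graph_of (\<lambda>y. {g y})) (Y k, g (Y k))"
    and slope: "\<And>k. inner (Z k) (E k) \<le> \<eta> k"
    by metis
  have "\<eta> \<longlonglongrightarrow> min \<epsilon> 0"
    unfolding \<eta>_def by (intro tendsto_min tendsto_const LIMSEQ_inverse_real_of_nat)
  then have "\<eta> \<longlonglongrightarrow> 0" using \<open>0 < \<epsilon>\<close> by simp
  have "(\<lambda>k. Y k - x) \<longlonglongrightarrow> 0"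
    by (rule Lim_null_comparison[OF _ \<open>\<eta> \<longlonglongrightarrow> 0\<close>])
      (use Y in \<open>auto intro!: always_eventually less_imp_le simp: dist_norm\<close>)
  then have "Y \<longlonglongrightarrow> x" by (rule LIM_zero_cancel)
  moreover have "Y k \<in> ball x \<epsilon>" for k using Y[of k] \<open>\<eta> k \<le> \<epsilon>\<close> by (simp add: dist_commute)
  ultimately obtain z e where "norm e = 1" "inner z e \<le> 0"
    and "(z, - e) \<in> limiting_normal_cone (graph_of (\<lambda>y. {g y})) (x, g x)"
    using limiting_normal_of_vanishing_slopes[OF lip \<open>0 < \<epsilon>\<close> _ _ E normal slope \<open>\<eta> \<longlonglongrightarrow> 0\<close>] by blast
  moreover have "e \<noteq> 0" using \<open>norm e = 1\<close> by auto
  ultimately show False using pd[of e z] by (simp add: mem_second_order_subdiff_iff)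
qed

lemma penalty_local_min_regular_normal:
  fixes g :: "'a::euclidean_space \<Rightarrow> 'b::euclidean_space"
  assumes "\<delta> > 0" "\<kappa> \<ge> 0"
    and local_min: "\<And>y'. dist y' y < \<delta> \<Longrightarrow>
      - inner w (y - x) + \<kappa> / 2 * (norm (g y - g x))\<^sup>2 \<le> - inner w (y' - x) + \<kappa> / 2 * (norm (g y' - g x))\<^sup>2"
  shows "(w, - \<kappa> *\<^sub>R (g y - g x)) \<in> regular_normal_cone (graph_of (\<lambda>y. {g y})) (y, g y)"
proof -
  define h where "h = (\<lambda>(y', v). - inner w (y' - x) + \<kappa> / 2 * (norm (v - g x))\<^sup>2)"
  have "- (- w, \<kappa> *\<^sub>R (g y - g x)) \<in> regular_normal_cone (graph_of (\<lambda>y. {g y})) (y, g y)"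
  proof (rule regular_normal_cone_graph_at_local_min[OF \<open>\<delta> > 0\<close>, where h = h and C = "\<kappa> / 2"])
    show "h (y, g y) \<le> h (y', g y')" if "dist y' y < \<delta>" for y'
      using local_min[OF that] by (simp add: h_def)
  next
    fix y'
    have "h (y', g y') - h (y, g y)
        = - inner w (y' - y) + \<kappa> * inner (g y - g x) (g y' - g y) + \<kappa> / 2 * (norm (g y' - g y))\<^sup>2"
      by (simp add: h_def power2_norm_eq_inner inner_diff_left inner_diff_right inner_commute
          algebra_simps)
    also have "\<dots> \<le> - inner w (y' - y) + \<kappa> * inner (g y - g x) (g y' - g y)
                    + \<kappa> / 2 * (norm (y' - y, g y' - g y))\<^sup>2"
      using \<open>\<kappa> \<ge> 0\<close> norm_snd_le by (auto intro!: mult_left_mono power_mono)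
    finally show "h (y', g y') - h (y, g y) \<le> inner (- w, \<kappa> *\<^sub>R (g y - g x)) ((y', g y') - (y, g y))
        + \<kappa> / 2 * (norm ((y', g y') - (y, g y)))\<^sup>2"
      by simp
  qed
  then show ?thesis by simp
qed

lemma subregular_penalty_norm_bound:
  fixes u :: "'a::real_inner" and v :: "'b::real_normed_vector"
  assumes "c * norm u \<le> norm v" "\<kappa> / 2 * (norm v)\<^sup>2 \<le> inner w u" "0 < c" "0 < \<kappa>"
  shows "norm u \<le> 2 * norm w / (c\<^sup>2 * \<kappa>)"
proof -
  have "\<kappa> / 2 * (c * norm u)\<^sup>2 \<le> \<kappa> / 2 * (norm v)\<^sup>2"
    using assms by (intro mult_left_mono power_mono) auto
  also have "\<dots> \<le> norm w * norm u"
    using assms(2) norm_cauchy_schwarz[of w u] by linarith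
  finally have "norm u * (\<kappa> / 2 * c\<^sup>2 * norm u) \<le> norm u * norm w"
    by (simp add: power2_eq_square algebra_simps)
  then show ?thesis
    using \<open>0 < c\<close> \<open>0 < \<kappa>\<close> by (cases "u = 0") (auto simp: field_simps)
qed

lemma penalised_minimiser_regular_normal:
  fixes g :: "'a::euclidean_space \<Rightarrow> 'b::euclidean_space" and w :: 'a and c :: real
  defines "A \<equiv> 2 * norm w / c\<^sup>2"
  assumes lip: "L-lipschitz_on (ball x \<epsilon>) g"
    and subreg: "\<And>y. dist y x < r \<Longrightarrow> c * norm (y - x) \<le> norm (g y - g x)"
    and "0 < c" "0 < \<kappa>" "\<rho> < r" "\<rho> < \<epsilon>" "A / \<kappa> < \<rho>"
  obtains y where "norm (y - x) \<le> A / \<kappa>" "norm (\<kappa> *\<^sub>R (g y - g x)) \<le> L * A"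
    "(w, - \<kappa> *\<^sub>R (g y - g x)) \<in> regular_normal_cone (graph_of (\<lambda>y. {g y})) (y, g y)"
proof -
  define F where "F y = - inner w (y - x) + \<kappa> / 2 * (norm (g y - g x))\<^sup>2" for y
  have "0 \<le> A / \<kappa>" using \<open>0 < \<kappa>\<close> by (simp add: A_def)
  then have "0 < \<rho>" using \<open>A / \<kappa> < \<rho>\<close> by linarith
  have "cball x \<rho> \<subseteq> ball x \<epsilon>" using \<open>\<rho> < \<epsilon>\<close> by auto
  then have "continuous_on (cball x \<rho>) F"
    using continuous_on_subset[OF lipschitz_on_continuous_on[OF lip]]
    unfolding F_def by (intro continuous_intros) auto
  then obtain y where "y \<in> cball x \<rho>" and min: "\<And>y'. y' \<in> cball x \<rho> \<Longrightarrow> F y \<le> F y'"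
    using continuous_attains_inf[OF compact_cball _ \<open>continuous_on (cball x \<rho>) F\<close>] \<open>0 < \<rho>\<close> by auto
  define n where "n = norm (y - x)"
  have "n \<le> \<rho>" using \<open>y \<in> cball x \<rho>\<close> by (simp add: n_def dist_norm norm_minus_commute)
  have "n \<le> A / \<kappa>"
  proof -
    have "c * norm (y - x) \<le> norm (g y - g x)"
      using subreg[of y] \<open>n \<le> \<rho>\<close> \<open>\<rho> < r\<close> by (simp add: n_def dist_norm norm_minus_commute)
    moreover have "\<kappa> / 2 * (norm (g y - g x))\<^sup>2 \<le> inner w (y - x)"
      using min[of x] \<open>0 < \<rho>\<close> by (simp add: F_def)
    ultimately show ?thesis
      using subregular_penalty_norm_bound[OF _ _ \<open>0 < c\<close> \<open>0 < \<kappa>\<close>] by (simp add: A_def n_def)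
  qed
  have "y \<in> ball x \<epsilon>" "x \<in> ball x \<epsilon>"
    using \<open>y \<in> cball x \<rho>\<close> \<open>cball x \<rho> \<subseteq> ball x \<epsilon>\<close> \<open>0 < \<rho>\<close> \<open>\<rho> < \<epsilon>\<close> by auto
  then have "norm (g y - g x) \<le> L * n" using lipschitz_on_normD[OF lip] by (simp add: n_def)
  also have "\<dots> \<le> L * (A / \<kappa>)"
    using \<open>n \<le> A / \<kappa>\<close> lipschitz_on_nonneg[OF lip] by (rule mult_left_mono)
  finally have bound: "norm (\<kappa> *\<^sub>R (g y - g x)) \<le> L * A"
    using \<open>0 < \<kappa>\<close> by (simp add: pos_le_divide_eq mult.commute mult.left_commute)
  have "\<rho> - n > 0" using \<open>n \<le> A / \<kappa>\<close> \<open>A / \<kappa> < \<rho>\<close> by simp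
  moreover have "F y \<le> F y'" if "dist y' y < \<rho> - n" for y'
    using min[of y'] that dist_triangle[of x y' y] by (simp add: n_def dist_norm norm_minus_commute)
  ultimately have "(w, - \<kappa> *\<^sub>R (g y - g x)) \<in> regular_normal_cone (graph_of (\<lambda>y. {g y})) (y, g y)"
    unfolding F_def by (rule penalty_local_min_regular_normal[OF _ less_imp_le[OF \<open>0 < \<kappa>\<close>]])
  with \<open>n \<le> A / \<kappa>\<close> bound that show thesis by (simp add: n_def)
qed

lemma strongly_subregular_coderivative_surj:
  fixes g :: "'a::euclidean_space \<Rightarrow> 'b::euclidean_space"
  assumes lip: "L-lipschitz_on (ball x \<epsilon>) g" and "0 < \<epsilon>" and "strongly_subregular_at g x"
  obtains d where "(w, - d) \<in> limiting_normal_cone (graph_of (\<lambda>y. {g y})) (x, g x)"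
proof -
  obtain c r where "0 < c" "0 < r" and subreg: "\<And>y. dist y x < r \<Longrightarrow> c * norm (y - x) \<le> norm (g y - g x)"
    using \<open>strongly_subregular_at g x\<close> unfolding strongly_subregular_at_def by blast
  define A \<rho> where "A = 2 * norm w / c\<^sup>2" and "\<rho> = min r \<epsilon> / 2"
  define \<kappa> where "\<kappa> k = real (Suc k) + A / \<rho>" for k
  have "0 \<le> A" "0 < \<rho>" "\<rho> < r" "\<rho> < \<epsilon>" using \<open>0 < r\<close> \<open>0 < \<epsilon>\<close> by (auto simp: A_def \<rho>_def)
  then have "real (Suc k) \<le> \<kappa> k" "0 < \<kappa> k" "A < \<rho> * \<kappa> k" for k
    by (auto simp: \<kappa>_def distrib_left add_pos_nonneg)
  then have "A / \<kappa> k < \<rho>" for k by (simp add: pos_divide_less_eq)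
  have "\<exists>y. norm (y - x) \<le> A / \<kappa> k \<and> norm (\<kappa> k *\<^sub>R (g y - g x)) \<le> L * A \<and>
      (w, - \<kappa> k *\<^sub>R (g y - g x)) \<in> regular_normal_cone (graph_of (\<lambda>y. {g y})) (y, g y)" for k
    using penalised_minimiser_regular_normal[OF lip subreg \<open>0 < c\<close> \<open>0 < \<kappa> k\<close> \<open>\<rho> < r\<close> \<open>\<rho> < \<epsilon>\<close>,
        of w, folded A_def] \<open>A / \<kappa> k < \<rho>\<close>
    by blast
  then obtain Y where Y: "\<And>k. norm (Y k - x) \<le> A / \<kappa> k"
    and bounded: "\<And>k. (w, - \<kappa> k *\<^sub>R (g (Y k) - g x)) \<in> {w} \<times> cball 0 (L * A)"
    and normal: "\<And>k. (w, - \<kappa> k *\<^sub>R (g (Y k) - g x))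
                      \<in> regular_normal_cone (graph_of (\<lambda>y. {g y})) (Y k, g (Y k))"
    by (simp add: mem_Times_iff) metis
  have "norm (Y k - x) \<le> A * inverse (real (Suc k))" for k
  proof -
    have "A / \<kappa> k \<le> A / real (Suc k)"
      using \<open>real (Suc k) \<le> \<kappa> k\<close> \<open>0 \<le> A\<close> by (intro divide_left_mono) auto
    then show ?thesis using Y[of k] by (simp add: divide_inverse)
  qed
  then have "(\<lambda>k. Y k - x) \<longlonglongrightarrow> 0"
    by (intro Lim_null_comparison[OF _ tendsto_mult_right_zero[OF LIMSEQ_inverse_real_of_nat, where c = A]]) simp
  then have "Y \<longlonglongrightarrow> x" by (rule LIM_zero_cancel)
  moreover have "isCont g x"
    using continuous_on_interior[OF lipschitz_on_continuous_on[OF lip]] \<open>0 < \<epsilon>\<close> by simp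
  moreover have "compact ({w} \<times> cball (0::'b) (L * A))" by (intro compact_Times compact_cball compact_sing)
  ultimately obtain v where "v \<in> {w} \<times> cball 0 (L * A)"
    "v \<in> limiting_normal_cone (graph_of (\<lambda>y. {g y})) (x, g x)"
    using limiting_normal_cone_graph_of_bounded_seq[where Y = Y, OF _ _ _ normal bounded] by blast
  then show thesis using that[of "- snd v"] by (cases v) simp
qed

lemma armijo_condition:
  fixes f :: "'a::real_normed_vector \<Rightarrow> real"
  assumes "(f has_derivative f') (at x)" "f' d < 0" "\<sigma> < 1"
  shows "\<exists>\<delta>>0. \<forall>\<tau>. 0 < \<tau> \<and> \<tau> < \<delta> \<longrightarrow> f (x + \<tau> *\<^sub>R d) \<le> f x + \<sigma> * \<tau> * f' d"
proof -
  have "linear f'" using assms(1) by (rule has_derivative_linear)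
  have "((\<lambda>\<tau>::real. x + \<tau> *\<^sub>R d) has_derivative (\<lambda>h. h *\<^sub>R d)) (at 0)"
    by (auto intro!: derivative_eq_intros)
  from has_derivative_compose[OF this, of f f'] assms(1)
  have "((\<lambda>\<tau>. f (x + \<tau> *\<^sub>R d)) has_derivative (\<lambda>h. f' (h *\<^sub>R d))) (at 0)" by simp
  then have "((\<lambda>\<tau>. f (x + \<tau> *\<^sub>R d)) has_field_derivative f' d) (at 0)"
    unfolding has_field_derivative_def
    by (rule has_derivative_eq_rhs) (simp add: linear_scale[OF \<open>linear f'\<close>] fun_eq_iff)
  then have "((\<lambda>\<tau>. (f (x + \<tau> *\<^sub>R d) - f x) / \<tau>) \<longlongrightarrow> f' d) (at 0)"
    by (simp add: has_field_derivative_iff)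
  moreover have "(\<sigma> - 1) * f' d > 0" using assms(2,3) by (simp add: mult_neg_neg)
  ultimately have "\<forall>\<^sub>F \<tau> in at 0. dist ((f (x + \<tau> *\<^sub>R d) - f x) / \<tau>) (f' d) < (\<sigma> - 1) * f' d"
    by (rule tendstoD)
  then obtain \<delta> where "\<delta> > 0" and \<delta>: "\<And>\<tau>. \<tau> \<noteq> 0 \<Longrightarrow> dist \<tau> 0 < \<delta> \<Longrightarrow>
      dist ((f (x + \<tau> *\<^sub>R d) - f x) / \<tau>) (f' d) < (\<sigma> - 1) * f' d"
    unfolding eventually_at by auto
  have "f (x + \<tau> *\<^sub>R d) \<le> f x + \<sigma> * \<tau> * f' d" if "0 < \<tau>" "\<tau> < \<delta>" for \<tau>
  proof -
    have "(f (x + \<tau> *\<^sub>R d) - f x) / \<tau> < \<sigma> * f' d"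
      using \<delta>[of \<tau>] that by (simp add: dist_real_def algebra_simps)
    then show ?thesis using \<open>0 < \<tau>\<close> by (simp add: divide_less_eq algebra_simps)
  qed
  with \<open>\<delta> > 0\<close> show ?thesis by blast
qed

theorem proposition3p3:
  fixes \<phi> :: "'a::euclidean_space \<Rightarrow> real" and g :: "'a \<Rightarrow> 'a" and x :: 'a
  assumes grad: "\<And>y. (\<phi> has_derivative (\<lambda>h. inner (g y) h)) (at y)"
    and cont: "continuous_on UNIV g"
    and lip: "\<exists>\<epsilon>>0. \<exists>L. L-lipschitz_on (ball x \<epsilon>) g"
    and nz: "g x \<noteq> 0"
    and pd: "\<And>u z. u \<noteq> 0 \<Longrightarrow> z \<in> second_order_subdiff g x u \<Longrightarrow> inner z u > 0"
  shows "(\<exists>d. d \<noteq> 0 \<and> - g x \<in> second_order_subdiff g x d)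
    \<and> (\<forall>d. - g x \<in> second_order_subdiff g x d \<longrightarrow> inner (g x) d < 0)
    \<and> (\<forall>\<sigma>. 0 < \<sigma> \<and> \<sigma> < 1 \<longrightarrow> (\<forall>d. - g x \<in> second_order_subdiff g x d \<longrightarrow>
         (\<exists>\<delta>>0. \<forall>\<tau>. 0 < \<tau> \<and> \<tau> < \<delta> \<longrightarrow>
            \<phi> (x + \<tau> *\<^sub>R d) \<le> \<phi> x + \<sigma> * \<tau> * inner (g x) d)))"
proof -
  obtain \<epsilon> L where "0 < \<epsilon>" and lip: "L-lipschitz_on (ball x \<epsilon>) g" using lip by blast
  have zero_dir: "- g x \<notin> second_order_subdiff g x 0"
    using second_order_subdiff_zero_lipschitz[OF lip open_ball] \<open>0 < \<epsilon>\<close> nz by force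
  obtain d where "(- g x, - d) \<in> limiting_normal_cone (graph_of (\<lambda>y. {g y})) (x, g x)"
    using strongly_subregular_coderivative_surj[OF lip \<open>0 < \<epsilon>\<close>
        positive_definite_imp_strongly_subregular[OF lip \<open>0 < \<epsilon>\<close> pd]] .
  then have "- g x \<in> second_order_subdiff g x d" by (simp add: mem_second_order_subdiff_iff)
  moreover from this zero_dir have "d \<noteq> 0" by metis
  ultimately have newton: "\<exists>d. d \<noteq> 0 \<and> - g x \<in> second_order_subdiff g x d" by blast
  have descent: "inner (g x) d < 0" if "- g x \<in> second_order_subdiff g x d" for d
    using pd[of d "- g x"] that zero_dir by (cases "d = 0") auto
  show ?thesis
    using newton descent armijo_condition[OF grad] by blast
qed

end
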